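(* Let $Y$ be a set, $\Lambda$ an index set, and for $\ell\in\Lambda$ let $\rho_\ell:Y\to Y_\ell$ be surjective onto a finite set, with a probability density $\nu_\ell>0$ on $Y_\ell$ and an orthonormal basis $\mathcal{B}_\ell$ of $L^2(Y_\ell,\nu_\ell)$ (inner product $\langle f,g\rangle=\sum_y\nu_\ell(y)f(y)\overline{g(y)}$) containing the constant function $1$, $\mathcal{B}_\ell^*=\mathcal{B}_\ell\setminus\{1\}$. Let $(X,\mu)$ be a measure space with $\mu(X)<\infty$ and $F:X\to Y$ with all sets $\{\rho_\ell(F_x)=y\}$ measurable. Let $\mathcal{L}^*\subset\Lambda$ be finite and let $\Delta$ be the smallest non-negative real number such that $\sum_{\ell\in\mathcal{L}^*}\sum_{\varphi\in\mathcal{B}_\ell^*}|\int_X\alpha(x)\varphi(\rho_\ell(F_x))d\mu(x)|^2\leq\Delta\int_X|\alpha|^2d\mu$ for all square-integrable $\alpha:X\to\mathbf{C}$. Then for any subsets $\Omega_\ell\subset Y_\ell$ ($\ell\in\mathcal{L}^*$), $$\int_X\big(P(x,\mathcal{L})-P(\mathcal{L})\big)^2\,d\mu(x)\leq\Delta\,Q(\mathcal{L}),$$ where $P(x,\mathcal{L})=|\{\ell\in\mathcal{L}^*\mid \rho_\ell(F_x)\in\Omega_\ell\}|$, $P(\mathcal{L})=\sum_{\ell\in\mathcal{L}^*}\nu_\ell(\Omega_\ell)$ and $Q(\mathcal{L})=\sum_{\ell\in\mathcal{L}^*}\nu_\ell(\Omega_\ell)(1-\nu_\ell(\Omega_\ell))$,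 with $\nu_\ell(\Omega_\ell)=\sum_{y\in\Omega_\ell}\nu_\ell(y)$. *)

theory Defs
  imports "HOL-Analysis.Analysis" "HOL-Probability.Probability"
begin

definition l2inner :: "'z set \<Rightarrow> ('z \<Rightarrow> real) \<Rightarrow> ('z \<Rightarrow> complex) \<Rightarrow> ('z \<Rightarrow> complex) \<Rightarrow> complex" where
  "l2inner Yset nu f g = (\<Sum>y\<in>Yset. complex_of_real (nu y) * f y * cnj (g y))"

text \<open>B is an orthonormal basis of L^2(Yset, nu) (functions compared on Yset through
  the inner product; distinct elements of B are orthogonal, so they differ on Yset).\<close>
definition is_onb :: "'z set \<Rightarrow> ('z \<Rightarrow> real) \<Rightarrow> ('z \<Rightarrow> complex) set \<Rightarrow> bool" where
  "is_onb Yset nu B \<longleftrightarrow> finite B \<and>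
     (\<forall>\<phi>\<in>B. \<forall>\<psi>\<in>B. l2inner Yset nu \<phi> \<psi> = (if \<phi> = \<psi> then 1 else 0)) \<and>
     (\<forall>f :: 'z \<Rightarrow> complex. \<exists>c. \<forall>y\<in>Yset. f y = (\<Sum>\<phi>\<in>B. c \<phi> * \<phi> y))"

definition nu_set :: "('z \<Rightarrow> real) \<Rightarrow> 'z set \<Rightarrow> real" where
  "nu_set nu \<Omega> = (\<Sum>y\<in>\<Omega>. nu y)"

definition square_integrable :: "'x measure \<Rightarrow> ('x \<Rightarrow> complex) \<Rightarrow> bool" where
  "square_integrable M \<alpha> \<longleftrightarrow> \<alpha> \<in> borel_measurable M \<and> integrable M (\<lambda>x. (cmod (\<alpha> x))\<^sup>2)"

definition sieve_ineq ::
  "'x measure \<Rightarrow> ('x \<Rightarrow> 'y) \<Rightarrow> ('l \<Rightarrow> 'y \<Rightarrow> 'z) \<Rightarrow> ('l \<Rightarrow> ('z \<Rightarrow> complex) set) \<Rightarrow> 'l set \<Rightarrow> real \<Rightarrow> bool" where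
  "sieve_ineq M F \<rho> B Ls D \<longleftrightarrow>
     (\<forall>\<alpha>. square_integrable M \<alpha> \<longrightarrow>
        (\<Sum>l\<in>Ls. \<Sum>\<phi>\<in>B l - {(\<lambda>_. 1)}.
            (cmod (integral\<^sup>L M (\<lambda>x. \<alpha> x * \<phi> (\<rho> l (F x)))))\<^sup>2)
        \<le> D * integral\<^sup>L M (\<lambda>x. (cmod (\<alpha> x))\<^sup>2))"

end

theory Submission
  imports Defs
begin

text \<open>The large sieve inequality bounds the norm of the map sending \<open>\<alpha>\<close> to the family of
  integrals \<open>\<integral> \<alpha> \<cdot> \<phi> \<circ> \<rho>\<^sub>l \<circ> F\<close> by \<open>sqrt \<Delta>\<close>, so its adjoint, sending a coefficient family \<open>\<beta>\<close> to
  \<open>\<Sum> \<beta>(l,\<phi>) \<cdot> \<phi> \<circ> \<rho>\<^sub>l \<circ> F\<close>, obeys the same bound. Expanding the centred indicator of \<open>\<Omega>\<^sub>l\<close> in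
  the basis \<open>\<B>\<^sub>l\<close> minus the constant function exhibits \<open>P(x,\<L>) - P(\<L>)\<close> as such an adjoint
  image, and by Parseval the squared norm of its coefficients is
  \<open>\<Sum>\<^sub>l \<nu>\<^sub>l(\<Omega>\<^sub>l) - \<nu>\<^sub>l(\<Omega>\<^sub>l)\<^sup>2 = Q(\<L>)\<close>.\<close>

lemma Cauchy_Schwarz_self_bound:
  fixes A \<Delta> :: real and b c :: "'k \<Rightarrow> real"
  assumes "0 \<le> A" and "0 \<le> \<Delta>"
    and "A \<le> (\<Sum>k\<in>K. b k * c k)" and "(\<Sum>k\<in>K. (c k)\<^sup>2) \<le> \<Delta> * A"
  shows "A \<le> \<Delta> * (\<Sum>k\<in>K. (b k)\<^sup>2)"
proof -
  have "A\<^sup>2 \<le> (\<Sum>k\<in>K. b k * c k)\<^sup>2"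
    using assms(1,3) by (simp add: power_mono)
  also have "\<dots> \<le> (\<Sum>k\<in>K. (b k)\<^sup>2) * (\<Sum>k\<in>K. (c k)\<^sup>2)"
    by (rule Cauchy_Schwarz_ineq_sum)
  also have "\<dots> \<le> (\<Sum>k\<in>K. (b k)\<^sup>2) * (\<Delta> * A)"
    using assms(4) by (intro mult_left_mono) (simp_all add: sum_nonneg)
  finally have "A * A \<le> (\<Delta> * (\<Sum>k\<in>K. (b k)\<^sup>2)) * A"
    by (simp only: power2_eq_square ac_simps)
  then show ?thesis
    using assms(1,2) by (cases "A = 0") (simp_all add: sum_nonneg)
qed

lemma bounded_image_sum:
  fixes f :: "'k \<Rightarrow> 'a \<Rightarrow> 'b::real_normed_vector"
  assumes "finite K" and "\<And>k. k \<in> K \<Longrightarrow> bounded (f k ` A)"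
  shows "bounded ((\<lambda>x. \<Sum>k\<in>K. f k x) ` A)"
  using assms
  by (induction K rule: finite_induct) (auto intro: bounded_plus_comp simp: image_constant_conv)

lemma bounded_image_mult:
  fixes f g :: "'a \<Rightarrow> 'b::real_normed_algebra"
  assumes "bounded (f ` A)" and "bounded (g ` A)"
  shows "bounded ((\<lambda>x. f x * g x) ` A)"
proof -
  obtain b c where "\<And>x. x \<in> A \<Longrightarrow> norm (f x) \<le> b" and "\<And>x. x \<in> A \<Longrightarrow> norm (g x) \<le> c"
    using assms unfolding bounded_iff by auto
  then have "norm (f x * g x) \<le> b * c" if "x \<in> A" for x
    using that by (intro order_trans[OF norm_mult_ineq] mult_mono) (auto intro: order_trans[OF norm_ge_zero])
  then show ?thesis unfolding bounded_iff by auto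
qed

lemma integrable_bounded_image:
  fixes f :: "'a \<Rightarrow> 'b::{banach, second_countable_topology}"
  assumes "finite_measure M" and "f \<in> borel_measurable M" and "bounded (f ` space M)"
  shows "integrable M f"
proof -
  obtain b where "\<And>x. x \<in> space M \<Longrightarrow> norm (f x) \<le> b"
    using assms(3) unfolding bounded_iff by auto
  then show ?thesis
    using assms(2) by (intro finite_measure.integrable_const_bound[OF assms(1), of _ b] AE_I2)
qed

lemma simple_function_finite_range:
  assumes "finite (range g)" and "\<And>y. {x \<in> space M. g x = y} \<in> sets M"
  shows "simple_function M g"
proof -
  have "finite (g ` space M)"
    using assms(1) by (rule finite_subset[rotated]) auto
  moreover have "g -` {y} \<inter> space M = {x \<in> space M. g x = y}" for y
    by auto
  ultimately show ?thesis
    unfolding simple_function_def using assms(2) by simp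
qed

lemma large_sieve_duality:
  fixes M :: "'x measure" and K :: "'k set"
    and \<psi> :: "'k \<Rightarrow> 'x \<Rightarrow> complex" and \<beta> :: "'k \<Rightarrow> complex"
  assumes "finite_measure M" and "finite K"
    and \<psi>_measurable: "\<And>k. k \<in> K \<Longrightarrow> \<psi> k \<in> borel_measurable M"
    and \<psi>_bounded: "\<And>k. k \<in> K \<Longrightarrow> bounded (\<psi> k ` space M)"
    and large_sieve: "\<And>\<alpha>. square_integrable M \<alpha> \<Longrightarrow>
       (\<Sum>k\<in>K. (cmod (integral\<^sup>L M (\<lambda>x. \<alpha> x * \<psi> k x)))\<^sup>2) \<le> \<Delta> * integral\<^sup>L M (\<lambda>x. (cmod (\<alpha> x))\<^sup>2)"
    and "0 \<le> \<Delta>"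
  shows "integral\<^sup>L M (\<lambda>x. (cmod (\<Sum>k\<in>K. \<beta> k * \<psi> k x))\<^sup>2) \<le> \<Delta> * (\<Sum>k\<in>K. (cmod (\<beta> k))\<^sup>2)"
proof -
  define S where "S x = (\<Sum>k\<in>K. \<beta> k * \<psi> k x)" for x
  \<comment> \<open>Testing the large sieve against \<open>\<alpha> = cnj S\<close>: \<open>\<parallel>S\<parallel>\<^sup>2 = \<Sum> \<beta>\<^sub>k \<langle>\<alpha>, \<psi>\<^sub>k\<rangle>\<close>, then Cauchy-Schwarz.\<close>
  define \<alpha> where "\<alpha> x = cnj (S x)" for x
  have "bounded (S ` space M)"
    unfolding S_def using \<open>finite K\<close> \<psi>_bounded
    by (intro bounded_image_sum bounded_image_mult) (auto simp: image_constant_conv)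
  then have \<alpha>_bounded: "bounded ((\<lambda>x. cmod (\<alpha> x)) ` space M)"
    using bounded_norm_comp[of S] by (simp add: \<alpha>_def)
  have S_measurable: "S \<in> borel_measurable M"
    unfolding S_def using \<psi>_measurable by measurable
  then have \<alpha>_measurable: "\<alpha> \<in> borel_measurable M"
    unfolding \<alpha>_def by (simp add: borel_measurable_complex_iff)
  have \<alpha>_square_integrable: "square_integrable M \<alpha>"
    unfolding square_integrable_def power2_eq_square
    using \<alpha>_measurable \<alpha>_bounded
    by (auto intro!: integrable_bounded_image[OF \<open>finite_measure M\<close>] bounded_image_mult)
  have \<alpha>\<psi>_integrable: "integrable M (\<lambda>x. \<alpha> x * \<psi> k x)" if "k \<in> K" for k
    using \<alpha>_measurable \<psi>_measurable[OF that] \<alpha>_bounded \<psi>_bounded[OF that]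
    by (intro integrable_bounded_image[OF \<open>finite_measure M\<close>] bounded_image_mult)
       (simp_all add: bounded_norm_comp[of \<alpha>, symmetric])
  define I where "I k = integral\<^sup>L M (\<lambda>x. \<alpha> x * \<psi> k x)" for k
  define A where "A = integral\<^sup>L M (\<lambda>x. (cmod (S x))\<^sup>2)"
  have "A \<ge> 0" unfolding A_def by (simp add: Bochner_Integration.integral_nonneg)
  have "complex_of_real A = integral\<^sup>L M (\<lambda>x. S x * \<alpha> x)"
    unfolding A_def \<alpha>_def integral_complex_of_real[symmetric] complex_norm_square ..
  also have "\<dots> = integral\<^sup>L M (\<lambda>x. \<Sum>k\<in>K. \<beta> k * (\<alpha> x * \<psi> k x))"
    unfolding S_def sum_distrib_right by (simp add: mult_ac)
  also have "\<dots> = (\<Sum>k\<in>K. \<beta> k * I k)"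
    unfolding I_def by (simp add: \<alpha>\<psi>_integrable)
  finally have "A = cmod (\<Sum>k\<in>K. \<beta> k * I k)"
    using \<open>A \<ge> 0\<close> by (metis norm_of_real abs_of_nonneg)
  also have "\<dots> \<le> (\<Sum>k\<in>K. cmod (\<beta> k) * cmod (I k))"
    by (rule order_trans[OF norm_sum]) (simp add: norm_mult)
  finally have "A \<le> (\<Sum>k\<in>K. cmod (\<beta> k) * cmod (I k))" .
  moreover have "(\<Sum>k\<in>K. (cmod (I k))\<^sup>2) \<le> \<Delta> * A"
    using large_sieve[OF \<alpha>_square_integrable] unfolding I_def A_def \<alpha>_def by simp
  ultimately have "A \<le> \<Delta> * (\<Sum>k\<in>K. (cmod (\<beta> k))\<^sup>2)"
    by (rule Cauchy_Schwarz_self_bound[OF \<open>A \<ge> 0\<close> \<open>0 \<le> \<Delta>\<close>])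
  then show ?thesis unfolding A_def S_def .
qed

lemma l2inner_cong_left:
  assumes "\<And>y. y \<in> Y \<Longrightarrow> f y = g y"
  shows "l2inner Y nu f h = l2inner Y nu g h"
  unfolding l2inner_def using assms by (intro sum.cong) auto

lemma l2inner_sum_left:
  assumes "finite B"
  shows "l2inner Y nu (\<lambda>y. \<Sum>\<phi>\<in>B. c \<phi> * \<phi> y) h = (\<Sum>\<phi>\<in>B. c \<phi> * l2inner Y nu \<phi> h)"
  unfolding l2inner_def
  by (simp add: sum_distrib_left sum_distrib_right mult_ac sum.swap[of _ Y])

lemma l2inner_commute: "l2inner Y nu g f = cnj (l2inner Y nu f g)"
  unfolding l2inner_def by (simp add: mult_ac)

lemma l2inner_indicator_left:
  assumes "finite Y" and "\<Omega> \<subseteq> Y"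
  shows "l2inner Y nu (indicator \<Omega>) g = (\<Sum>y\<in>\<Omega>. of_real (nu y) * cnj (g y))"
  unfolding l2inner_def using assms
  by (intro sum.mono_neutral_cong_right) (auto simp: indicator_def)

lemma is_onb_expansion:
  assumes onb: "is_onb Y nu B" and "y \<in> Y"
  shows "f y = (\<Sum>\<phi>\<in>B. l2inner Y nu f \<phi> * \<phi> y)"
proof -
  have "finite B"
    and orthonormal: "\<And>\<phi> \<psi>. \<phi> \<in> B \<Longrightarrow> \<psi> \<in> B \<Longrightarrow> l2inner Y nu \<phi> \<psi> = (if \<phi> = \<psi> then 1 else 0)"
    using onb unfolding is_onb_def by auto
  obtain c where c: "\<And>y. y \<in> Y \<Longrightarrow> f y = (\<Sum>\<phi>\<in>B. c \<phi> * \<phi> y)"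
    using onb unfolding is_onb_def by blast
  have "l2inner Y nu f \<psi> = c \<psi>" if "\<psi> \<in> B" for \<psi>
  proof -
    have "l2inner Y nu f \<psi> = l2inner Y nu (\<lambda>y. \<Sum>\<phi>\<in>B. c \<phi> * \<phi> y) \<psi>"
      using c by (rule l2inner_cong_left)
    also have "\<dots> = (\<Sum>\<phi>\<in>B. c \<phi> * l2inner Y nu \<phi> \<psi>)"
      by (rule l2inner_sum_left[OF \<open>finite B\<close>])
    also have "\<dots> = (\<Sum>\<phi>\<in>B. if \<phi> = \<psi> then c \<phi> else 0)"
      by (intro sum.cong) (simp_all add: orthonormal that)
    also have "\<dots> = c \<psi>"
      using \<open>finite B\<close> that by simp
    finally show ?thesis .
  qed
  then show ?thesis using c[OF \<open>y \<in> Y\<close>] by simp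
qed

lemma is_onb_parseval:
  assumes onb: "is_onb Y nu B"
  shows "l2inner Y nu f f = of_real (\<Sum>\<phi>\<in>B. (cmod (l2inner Y nu f \<phi>))\<^sup>2)"
proof -
  have "finite B" using onb unfolding is_onb_def by simp
  have "l2inner Y nu f f = l2inner Y nu (\<lambda>y. \<Sum>\<phi>\<in>B. l2inner Y nu f \<phi> * \<phi> y) f"
    using is_onb_expansion[OF onb] by (rule l2inner_cong_left)
  also have "\<dots> = (\<Sum>\<phi>\<in>B. l2inner Y nu f \<phi> * cnj (l2inner Y nu f \<phi>))"
    by (simp add: l2inner_sum_left[OF \<open>finite B\<close>] l2inner_commute[of Y nu _ f])
  finally show ?thesis
    by (simp add: complex_norm_square del: of_real_power)
qed

lemma is_onb_indicator_expansion:
  assumes "is_onb Y nu B" and "(\<lambda>_. 1) \<in> B" and "finite Y" and "\<Omega> \<subseteq> Y" and "y \<in> Y"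
  shows "indicator \<Omega> y - of_real (nu_set nu \<Omega>)
    = (\<Sum>\<phi>\<in>B - {\<lambda>_. 1}. l2inner Y nu (indicator \<Omega>) \<phi> * \<phi> y)"
proof -
  have "finite B" using assms(1) unfolding is_onb_def by simp
  have "indicator \<Omega> y = (\<Sum>\<phi>\<in>B. l2inner Y nu (indicator \<Omega>) \<phi> * \<phi> y)"
    by (rule is_onb_expansion[OF assms(1,5)])
  also have "\<dots> = l2inner Y nu (indicator \<Omega>) (\<lambda>_. 1)
      + (\<Sum>\<phi>\<in>B - {\<lambda>_. 1}. l2inner Y nu (indicator \<Omega>) \<phi> * \<phi> y)"
    by (subst sum.remove[OF \<open>finite B\<close> assms(2)]) simp
  also have "l2inner Y nu (indicator \<Omega>) (\<lambda>_. 1) = of_real (nu_set nu \<Omega>)"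
    using assms(3,4) by (simp add: l2inner_indicator_left nu_set_def)
  finally show ?thesis by simp
qed

lemma is_onb_indicator_parseval:
  assumes "is_onb Y nu B" and "(\<lambda>_. 1) \<in> B" and "finite Y" and "\<Omega> \<subseteq> Y"
  shows "(\<Sum>\<phi>\<in>B - {\<lambda>_. 1}. (cmod (l2inner Y nu (indicator \<Omega>) \<phi>))\<^sup>2)
    = nu_set nu \<Omega> * (1 - nu_set nu \<Omega>)"
proof -
  have "finite B" using assms(1) unfolding is_onb_def by simp
  have inner_one: "l2inner Y nu (indicator \<Omega>) (\<lambda>_. 1) = of_real (nu_set nu \<Omega>)"
    and inner_self: "l2inner Y nu (indicator \<Omega>) (indicator \<Omega>) = of_real (nu_set nu \<Omega>)"
    using assms(3,4) by (simp_all add: l2inner_indicator_left nu_set_def)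
  have "nu_set nu \<Omega> = (\<Sum>\<phi>\<in>B. (cmod (l2inner Y nu (indicator \<Omega>) \<phi>))\<^sup>2)"
    using is_onb_parseval[OF assms(1), of "indicator \<Omega>"] inner_self of_real_eq_iff by metis
  also have "\<dots> = (nu_set nu \<Omega>)\<^sup>2 + (\<Sum>\<phi>\<in>B - {\<lambda>_. 1}. (cmod (l2inner Y nu (indicator \<Omega>) \<phi>))\<^sup>2)"
    by (subst sum.remove[OF \<open>finite B\<close> assms(2)]) (simp add: inner_one)
  finally show ?thesis by (simp add: algebra_simps power2_eq_square)
qed

lemma sieve_ineq_dual:
  fixes M :: "'x measure" and F :: "'x \<Rightarrow> 'y" and \<beta> :: "'l \<Rightarrow> ('z \<Rightarrow> complex) \<Rightarrow> complex"
  assumes "finite_measure M" and "finite Ls" and B_finite: "\<And>l. l \<in> Ls \<Longrightarrow> finite (B l)"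
    and \<rho>_finite: "\<And>l. l \<in> Ls \<Longrightarrow> finite (range (\<rho> l))"
    and level_sets: "\<And>l y. {x \<in> space M. \<rho> l (F x) = y} \<in> sets M"
    and "sieve_ineq M F \<rho> B Ls \<Delta>" and "0 \<le> \<Delta>"
  shows "integral\<^sup>L M (\<lambda>x. (cmod (\<Sum>l\<in>Ls. \<Sum>\<phi>\<in>B l - {\<lambda>_. 1}. \<beta> l \<phi> * \<phi> (\<rho> l (F x))))\<^sup>2)
    \<le> \<Delta> * (\<Sum>l\<in>Ls. \<Sum>\<phi>\<in>B l - {\<lambda>_. 1}. (cmod (\<beta> l \<phi>))\<^sup>2)"
proof -
  define K where "K = Sigma Ls (\<lambda>l. B l - {\<lambda>_. 1})"
  define \<psi> :: "'l \<times> ('z \<Rightarrow> complex) \<Rightarrow> 'x \<Rightarrow> complex"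
    where "\<psi> = (\<lambda>(l, \<phi>) x. \<phi> (\<rho> l (F x)))"
  have "finite K" unfolding K_def using \<open>finite Ls\<close> B_finite by auto
  have simple: "simple_function M (\<psi> k)" if "k \<in> K" for k
  proof -
    obtain l \<phi> where k: "k = (l, \<phi>)" and "l \<in> Ls" using \<open>k \<in> K\<close> K_def by auto
    have "simple_function M (\<lambda>x. \<rho> l (F x))"
      using \<rho>_finite[OF \<open>l \<in> Ls\<close>] level_sets
      by (intro simple_function_finite_range) (auto intro: finite_subset[rotated])
    then show ?thesis
      using simple_function_compose[of M "\<lambda>x. \<rho> l (F x)" \<phi>] by (simp add: k \<psi>_def comp_def)
  qed
  have sum_K: "(\<Sum>k\<in>K. f k) = (\<Sum>l\<in>Ls. \<Sum>\<phi>\<in>B l - {\<lambda>_. 1}. f (l, \<phi>))" for f :: "_ \<Rightarrow> 'a::comm_monoid_add"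
    unfolding K_def using \<open>finite Ls\<close> B_finite by (simp add: sum.Sigma)
  have "integral\<^sup>L M (\<lambda>x. (cmod (\<Sum>k\<in>K. case_prod \<beta> k * \<psi> k x))\<^sup>2)
    \<le> \<Delta> * (\<Sum>k\<in>K. (cmod (case_prod \<beta> k))\<^sup>2)"
  proof (rule large_sieve_duality[OF \<open>finite_measure M\<close> \<open>finite K\<close> _ _ _ \<open>0 \<le> \<Delta>\<close>])
    show "\<psi> k \<in> borel_measurable M" and "bounded (\<psi> k ` space M)" if "k \<in> K" for k
      using simple[OF that] by (auto simp: borel_measurable_simple_function dest: simple_functionD(1))
    show "(\<Sum>k\<in>K. (cmod (integral\<^sup>L M (\<lambda>x. \<alpha> x * \<psi> k x)))\<^sup>2)
      \<le> \<Delta> * integral\<^sup>L M (\<lambda>x. (cmod (\<alpha> x))\<^sup>2)" if "square_integrable M \<alpha>" for \<alpha>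
      using \<open>sieve_ineq M F \<rho> B Ls \<Delta>\<close> that by (simp add: sieve_ineq_def sum_K \<psi>_def)
  qed
  then show ?thesis by (simp add: sum_K \<psi>_def)
qed

theorem proposition3p1:
  fixes M :: "'x measure"
    and F :: "'x \<Rightarrow> 'y"
    and \<rho> :: "'l \<Rightarrow> 'y \<Rightarrow> 'z"
    and Yl :: "'l \<Rightarrow> 'z set"
    and \<nu> :: "'l \<Rightarrow> 'z \<Rightarrow> real"
    and B :: "'l \<Rightarrow> ('z \<Rightarrow> complex) set"
    and Ls :: "'l set"
    and \<Omega> :: "'l \<Rightarrow> 'z set"
    and \<Delta> :: real
  assumes surj: "\<And>l. \<rho> l ` UNIV = Yl l"
    and fin: "\<And>l. finite (Yl l)"
    and nu_pos: "\<And>l y. y \<in> Yl l \<Longrightarrow> \<nu> l y > 0"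
    and nu_prob: "\<And>l. (\<Sum>y\<in>Yl l. \<nu> l y) = 1"
    and onb: "\<And>l. is_onb (Yl l) (\<nu> l) (B l)"
    and one_in: "\<And>l. (\<lambda>_. 1) \<in> B l"
    and finmeas: "emeasure M (space M) < \<infinity>"
    and meas: "\<And>l y. {x \<in> space M. \<rho> l (F x) = y} \<in> sets M"
    and Ls_fin: "finite Ls"
    and Delta_nonneg: "\<Delta> \<ge> 0"
    and Delta_ineq: "sieve_ineq M F \<rho> B Ls \<Delta>"
    and Delta_least: "\<And>D. D \<ge> 0 \<Longrightarrow> sieve_ineq M F \<rho> B Ls D \<Longrightarrow> \<Delta> \<le> D"
    and Omega_sub: "\<And>l. l \<in> Ls \<Longrightarrow> \<Omega> l \<subseteq> Yl l"
  shows "integral\<^sup>L M (\<lambda>x. (real (card {l \<in> Ls. \<rho> l (F x) \<in> \<Omega> l})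
              - (\<Sum>l\<in>Ls. nu_set (\<nu> l) (\<Omega> l)))\<^sup>2)
         \<le> \<Delta> * (\<Sum>l\<in>Ls. nu_set (\<nu> l) (\<Omega> l) * (1 - nu_set (\<nu> l) (\<Omega> l)))"
proof -
  define \<beta> where "\<beta> l = l2inner (Yl l) (\<nu> l) (indicator (\<Omega> l))" for l
  have "\<rho> l y \<in> Yl l" for l y using surj[of l] by auto
  have centred: "complex_of_real (real (card {l \<in> Ls. \<rho> l (F x) \<in> \<Omega> l}) - (\<Sum>l\<in>Ls. nu_set (\<nu> l) (\<Omega> l)))
    = (\<Sum>l\<in>Ls. \<Sum>\<phi>\<in>B l - {\<lambda>_. 1}. \<beta> l \<phi> * \<phi> (\<rho> l (F x)))" for x
  proof -
    have "of_nat (card {l \<in> Ls. \<rho> l (F x) \<in> \<Omega> l}) = (\<Sum>l\<in>Ls. indicator (\<Omega> l) (\<rho> l (F x)) :: complex)"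
      using Ls_fin by (simp add: indicator_def sum.If_cases Int_def)
    then show ?thesis
      using is_onb_indicator_expansion[OF onb one_in fin Omega_sub \<open>\<rho> _ _ \<in> Yl _\<close>]
      by (simp add: \<beta>_def sum_subtractf[symmetric])
  qed
  have "integral\<^sup>L M (\<lambda>x. (real (card {l \<in> Ls. \<rho> l (F x) \<in> \<Omega> l}) - (\<Sum>l\<in>Ls. nu_set (\<nu> l) (\<Omega> l)))\<^sup>2)
    = integral\<^sup>L M (\<lambda>x. (cmod (\<Sum>l\<in>Ls. \<Sum>\<phi>\<in>B l - {\<lambda>_. 1}. \<beta> l \<phi> * \<phi> (\<rho> l (F x))))\<^sup>2)"
    by (simp only: centred[symmetric] norm_of_real power2_abs)
  also have "\<dots> \<le> \<Delta> * (\<Sum>l\<in>Ls. \<Sum>\<phi>\<in>B l - {\<lambda>_. 1}. (cmod (\<beta> l \<phi>))\<^sup>2)"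
  proof (rule sieve_ineq_dual[OF _ Ls_fin _ _ meas Delta_ineq Delta_nonneg])
    show "finite_measure M" using finmeas by (intro finite_measureI) auto
    show "finite (B l)" for l using onb[of l] unfolding is_onb_def by simp
    show "finite (range (\<rho> l))" for l using surj[of l] fin[of l] by simp
  qed
  also have "\<dots> = \<Delta> * (\<Sum>l\<in>Ls. nu_set (\<nu> l) (\<Omega> l) * (1 - nu_set (\<nu> l) (\<Omega> l)))"
    by (simp add: \<beta>_def is_onb_indicator_parseval[OF onb one_in fin Omega_sub])
  finally show ?thesis .
qed

end
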